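(* Let $R$ be a commutative ring and let $a(x),b(x)\in R[[x]]$ be formal power series. For every integer $k\ge0$ with binary expansion $k=\sum_{j\ge0}d_j2^j$ ($d_j\in\{0,1\}$, almost all zero), set $$\dot f_k(x)=\prod_{j\ge0,\ d_j=1}\bigl(1-x^{2^j}\bigr),\qquad f_k(x)=\prod_{j\ge0,\ d_j=0}\bigl(1+x^{2^j}\bigr)\in R[[x]],\qquad \sigma_k=(-1)^{\sum_j d_j}.$$ Then $$a(x)\,b(x)=\sum_{k=0}^{\infty}f_k(x)\cdot\Bigl(\bigl(\sigma_k\,f_k(x)\,x^k\bigr)\odot\bigl(\dot f_k(x)\,a(x)\bigr)\odot\bigl(\dot f_k(x)\,b(x)\bigr)\Bigr).$$
   Context: For formal power series $P=\sum_i p_ix^i$ and $Q=\sum_i q_ix^i$, the termwise product is $P\odot Q=\sum_i p_iq_ix^i$. The infinite product defining $f_k$ converges in $R[[x]]$ (for $k=0$ it equals $\frac{1}{1-x}=\sum_{i\ge0}x^i$). In the formula, ordinary products are computed first, then the termwise products, and the result is multiplied (ordinary product) by $f_k(x)$; the infinite sum converges formally since the $k$-th summand has order at least $k$. *)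

theory Defs
  imports "HOL-Computational_Algebra.Formal_Power_Series"
begin

definition termwise_prod :: "'a::times fps \<Rightarrow> 'a fps \<Rightarrow> 'a fps" (infixl "\<odot>" 70) where
  "termwise_prod P Q = Abs_fps (\<lambda>i. fps_nth P i * fps_nth Q i)"

definition fdot :: "nat \<Rightarrow> 'a::comm_ring_1 fps" where
  "fdot k = (\<Prod>j\<in>{j. bit k j}. (1 - fps_X ^ (2 ^ j)))"

text \<open>Infinite product over the digits equal to 0, as the formal limit (in the
  X-adic metric of the fps ring) of its partial products.\<close>
definition fk :: "nat \<Rightarrow> 'a::comm_ring_1 fps" where
  "fk k = lim (\<lambda>N. \<Prod>j\<in>{j. j < N \<and> \<not> bit k j}. (1 + fps_X ^ (2 ^ j)))"

definition sigma :: "nat \<Rightarrow> 'a::comm_ring_1" where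
  "sigma k = (-1) ^ card {j. bit k j}"

end

theory Submission
  imports Defs "HOL-Library.Nat_Bijection"
begin
unbundle fps_syntax

text \<open>Write \<open>a = A(X\<^sup>2) + X B(X\<^sup>2)\<close> and \<open>b = C(X\<^sup>2) + X D(X\<^sup>2)\<close>.  Karatsuba's identity
  \<open>ab = (1 + X) (AC(X\<^sup>2) + X BD(X\<^sup>2)) - X ((B - A)(D - C))(X\<^sup>2)\<close>
  expresses the product through three products of half the size.  The factors of the summands
  satisfy \<open>f(2k) = (1 + X) f(k)(X\<^sup>2)\<close>, \<open>f(2k+1) = f(k)(X\<^sup>2)\<close>, \<open>fdot(2k) = fdot(k)(X\<^sup>2)\<close>,
  \<open>fdot(2k+1) = (1 - X) fdot(k)(X\<^sup>2)\<close>, \<open>sigma(2k+1) = -sigma(k)\<close>, and with these the summands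
  \<open>2k\<close> and \<open>2k+1\<close> for \<open>(a, b)\<close> are exactly the terms of Karatsuba's identity built from the
  \<open>k\<close>-th summands for \<open>(A, C)\<close>, \<open>(B, D)\<close> and \<open>(B - A, D - C)\<close>.  So the partial sums follow
  Karatsuba's recursion, and induction shows that the first \<open>2\<^sup>L\<close> summands give \<open>ab\<close> modulo
  \<open>X\<^bsup>2\<^sup>L\<^esup>\<close>.  As the \<open>k\<close>-th summand is divisible by \<open>X\<^sup>k\<close>, the series converges
  \<open>X\<close>-adically to \<open>ab\<close>.\<close>

lemma fps_X_power_dvd_iff:
  fixes f :: "'a::comm_semiring_1 fps"
  shows "fps_X ^ n dvd f \<longleftrightarrow> (\<forall>i<n. f $ i = 0)"
proof
  assume "fps_X ^ n dvd f"
  then obtain g where "f = fps_X ^ n * g" by (elim dvdE)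
  then show "\<forall>i<n. f $ i = 0" by (simp add: fps_X_power_mult_nth)
next
  assume "\<forall>i<n. f $ i = 0"
  then have "f = fps_X ^ n * fps_shift n f"
    by (intro fps_ext) (simp add: fps_X_power_mult_nth)
  then show "fps_X ^ n dvd f" by (metis dvd_triv_left)
qed

lemma fps_X_power_dvd_imp_nth_eq:
  fixes f g :: "'a::comm_ring_1 fps"
  shows "fps_X ^ n dvd f - g \<Longrightarrow> i < n \<Longrightarrow> f $ i = g $ i"
  by (simp add: fps_X_power_dvd_iff)

lemma fps_eq_if_fps_X_power_dvd_diff:
  fixes f g :: "'a::comm_ring_1 fps"
  assumes "\<And>n. fps_X ^ n dvd f - g"
  shows "f = g"
  using fps_X_power_dvd_imp_nth_eq[OF assms] by (intro fps_ext) blast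

lemma tendsto_fps_X_adicI:
  fixes f :: "'b \<Rightarrow> 'a::comm_ring_1 fps"
  assumes "\<And>n. eventually (\<lambda>x. fps_X ^ n dvd f x - g) F"
  shows "(f \<longlongrightarrow> g) F"
proof (rule tendsto_fpsI)
  fix n
  show "eventually (\<lambda>x. f x $ n = g $ n) F"
    using assms[of "Suc n"] by eventually_elim (blast intro: fps_X_power_dvd_imp_nth_eq lessI)
qed

lemma fps_X_power_dvd_lim_diff:
  fixes g :: "nat \<Rightarrow> 'a::comm_ring_1 fps"
  assumes "\<And>N. fps_X ^ N dvd g (Suc N) - g N"
  shows "fps_X ^ N dvd lim g - g N"
proof -
  have cauchy: "fps_X ^ N dvd g N' - g N" if "N \<le> N'" for N N'
    using that
  proof (induction N' rule: dec_induct)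
    case (step N')
    have "fps_X ^ N dvd fps_X ^ N'" by (rule le_imp_power_dvd) fact
    then have "fps_X ^ N dvd g (Suc N') - g N'" using assms dvd_trans by blast
    moreover have "g (Suc N') - g N = (g (Suc N') - g N') + (g N' - g N)" by simp
    ultimately show ?case using step.IH by (metis dvd_add)
  qed simp
  define G where "G = Abs_fps (\<lambda>i. g (Suc i) $ i)"
  have nth_G: "g N' $ i = G $ i" if "i < N'" for i N'
    using fps_X_power_dvd_imp_nth_eq[OF cauchy[of "Suc i" N'] lessI] that by (simp add: G_def)
  have "g \<longlonglongrightarrow> G"
    by (rule tendsto_fpsI) (use eventually_gt_at_top nth_G in \<open>blast intro: eventually_mono\<close>)
  then have "lim g = G" by (rule limI)
  then show ?thesis by (simp add: fps_X_power_dvd_iff nth_G)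
qed

definition fps_at_X2 :: "'a::zero fps \<Rightarrow> 'a fps" where
  "fps_at_X2 P = Abs_fps (\<lambda>n. if even n then P $ (n div 2) else 0)"

definition fps_even_part :: "'a fps \<Rightarrow> 'a fps" where
  "fps_even_part P = Abs_fps (\<lambda>n. P $ (2 * n))"

definition fps_odd_part :: "'a fps \<Rightarrow> 'a fps" where
  "fps_odd_part P = Abs_fps (\<lambda>n. P $ (2 * n + 1))"

lemma fps_even_odd_split:
  fixes P :: "'a::comm_semiring_1 fps"
  shows "P = fps_at_X2 (fps_even_part P) + fps_X * fps_at_X2 (fps_odd_part P)"
proof (rule fps_ext)
  fix n
  show "P $ n = (fps_at_X2 (fps_even_part P) + fps_X * fps_at_X2 (fps_odd_part P)) $ n"
    by (cases n) (auto simp: fps_at_X2_def fps_even_part_def fps_odd_part_def elim: oddE)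
qed

lemma fps_at_X2_add [simp]: "fps_at_X2 (P + Q) = fps_at_X2 P + fps_at_X2 (Q :: 'a::monoid_add fps)"
  by (rule fps_ext) (simp add: fps_at_X2_def)

lemma fps_at_X2_diff [simp]: "fps_at_X2 (P - Q) = fps_at_X2 P - fps_at_X2 (Q :: 'a::group_add fps)"
  by (rule fps_ext) (simp add: fps_at_X2_def)

lemma fps_at_X2_uminus [simp]: "fps_at_X2 (- P) = - fps_at_X2 (P :: 'a::group_add fps)"
  by (rule fps_ext) (simp add: fps_at_X2_def)

lemma fps_at_X2_0 [simp]: "fps_at_X2 0 = 0"
  by (rule fps_ext) (simp add: fps_at_X2_def)

lemma fps_at_X2_const [simp]: "fps_at_X2 (fps_const c) = fps_const c"
  by (rule fps_ext) (auto simp: fps_at_X2_def)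

lemma fps_at_X2_1 [simp]: "fps_at_X2 1 = (1 :: 'a::{zero,one} fps)"
  by (rule fps_ext) (auto simp: fps_at_X2_def)

lemma fps_at_X2_X [simp]: "fps_at_X2 fps_X = (fps_X ^ 2 :: 'a::comm_semiring_1 fps)"
  by (rule fps_ext) (auto simp: fps_at_X2_def)

lemma fps_at_X2_mult [simp]:
  fixes P Q :: "'a::comm_semiring_1 fps"
  shows "fps_at_X2 (P * Q) = fps_at_X2 P * fps_at_X2 Q"
proof (rule fps_ext)
  fix n
  let ?h = "\<lambda>i. fps_at_X2 P $ i * fps_at_X2 Q $ (n - i)"
  show "fps_at_X2 (P * Q) $ n = (fps_at_X2 P * fps_at_X2 Q) $ n"
  proof (cases "even n")
    case True
    then obtain m where n: "n = 2 * m" by blast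
    have "(fps_at_X2 P * fps_at_X2 Q) $ n = (\<Sum>i = 0..n. ?h i)" by (simp add: fps_mult_nth)
    also have "\<dots> = (\<Sum>i \<in> (\<lambda>j. 2 * j) ` {0..m}. ?h i)"
      by (rule sum.mono_neutral_right) (auto simp: n fps_at_X2_def)
    also have "\<dots> = (\<Sum>j = 0..m. ?h (2 * j))"
      by (subst sum.reindex) (auto simp: inj_on_def)
    also have "\<dots> = (\<Sum>j = 0..m. P $ j * Q $ (m - j))"
      by (intro sum.cong refl) (auto simp: n fps_at_X2_def simp flip: diff_mult_distrib2)
    also have "\<dots> = fps_at_X2 (P * Q) $ n" by (simp add: n fps_at_X2_def fps_mult_nth)
    finally show ?thesis ..
  next
    case False
    \<comment> \<open>in every product of coefficients one of the two indices is odd\<close>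
    then have "?h i = 0" if "i \<le> n" for i
      using that by (auto simp: fps_at_X2_def)
    then show ?thesis using False by (simp add: fps_mult_nth fps_at_X2_def)
  qed
qed

lemma fps_at_X2_power [simp]: "fps_at_X2 (P ^ k) = fps_at_X2 (P :: 'a::comm_semiring_1 fps) ^ k"
  by (induction k) simp_all

lemma fps_at_X2_prod:
  "fps_at_X2 (\<Prod>j\<in>S. f j) = (\<Prod>j\<in>S. fps_at_X2 (f j :: 'a::comm_semiring_1 fps))"
  by (induction S rule: infinite_finite_induct) simp_all

lemma fps_at_X2_dvd:
  fixes P :: "'a::comm_semiring_1 fps"
  assumes "fps_X ^ n dvd P"
  shows "fps_X ^ (2 * n) dvd fps_at_X2 P"
proof -
  from assms obtain Q where "P = fps_X ^ n * Q" by (elim dvdE)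
  then have "fps_at_X2 P = fps_X ^ (2 * n) * fps_at_X2 Q" by (simp add: power_mult)
  then show ?thesis by simp
qed

lemma termwise_prod_at_X2:
  fixes A B C D :: "'a::comm_semiring_1 fps"
  shows "(fps_at_X2 A + fps_X * fps_at_X2 B) \<odot> (fps_at_X2 C + fps_X * fps_at_X2 D)
           = fps_at_X2 (A \<odot> C) + fps_X * fps_at_X2 (B \<odot> D)"
proof (rule fps_ext)
  fix n
  show "((fps_at_X2 A + fps_X * fps_at_X2 B) \<odot> (fps_at_X2 C + fps_X * fps_at_X2 D)) $ n
          = (fps_at_X2 (A \<odot> C) + fps_X * fps_at_X2 (B \<odot> D)) $ n"
    by (cases n) (auto simp: fps_at_X2_def termwise_prod_def elim: oddE)
qed

lemma termwise_prod_0 [simp]: "0 \<odot> (P :: 'a::mult_zero fps) = 0"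
  by (rule fps_ext) (simp add: termwise_prod_def)

lemma termwise_prod_uminus [simp]: "(- P) \<odot> Q = - (P \<odot> (Q :: 'a::ring fps))"
  by (rule fps_ext) (simp add: termwise_prod_def)

lemma fps_X_power_dvd_termwise_prod:
  fixes P Q :: "'a::comm_semiring_1 fps"
  shows "fps_X ^ n dvd P \<Longrightarrow> fps_X ^ n dvd P \<odot> Q"
  by (simp add: fps_X_power_dvd_iff termwise_prod_def)

lemma prod_nat_split_zero:
  fixes g :: "nat \<Rightarrow> 'a::comm_monoid_mult"
  assumes "finite S"
  shows "(\<Prod>j\<in>S. g j) = (if 0 \<in> S then g 0 else 1) * (\<Prod>j\<in>Suc -` S. g (Suc j))"
proof -
  have S: "S = (S \<inter> {0}) \<union> Suc ` (Suc -` S)"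
    by (auto simp: image_iff dest: not0_implies_Suc)
  have "(\<Prod>j\<in>S. g j) = (\<Prod>j\<in>S \<inter> {0}. g j) * (\<Prod>j\<in>Suc ` (Suc -` S). g j)"
    by (subst S, rule prod.union_disjoint) (auto simp: assms finite_vimageI)
  also have "(\<Prod>j\<in>Suc ` (Suc -` S). g j) = (\<Prod>j\<in>Suc -` S. g (Suc j))"
    by (subst prod.reindex) simp_all
  also have "(\<Prod>j\<in>S \<inter> {0}. g j) = (if 0 \<in> S then g 0 else 1)"
    by (simp add: Int_insert_right)
  finally show ?thesis .
qed

lemma finite_bit_nat: "finite {j. bit (m::nat) j}"
proof -
  have "{j. bit m j} = set_decode m" by (simp add: set_decode_def bit_nat_def)
  then show ?thesis by simp
qed

lemma fdot_double:
  "(fdot m :: 'a::comm_ring_1 fps) = (if odd m then 1 - fps_X else 1) * fps_at_X2 (fdot (m div 2))"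
proof -
  have "Suc -` {j. bit m j} = {j. bit (m div 2) j}" by (auto simp: bit_Suc)
  then show ?thesis
    unfolding fdot_def
    by (subst prod_nat_split_zero) (simp_all add: finite_bit_nat bit_0 fps_at_X2_prod power_mult)
qed

lemma sigma_double: "(sigma m :: 'a::comm_ring_1) = (if odd m then -1 else 1) * sigma (m div 2)"
proof -
  have "Suc -` {j. bit m j} = {j. bit (m div 2) j}" by (auto simp: bit_Suc)
  then show ?thesis
    unfolding sigma_def prod_constant[symmetric]
    by (subst prod_nat_split_zero) (simp_all add: finite_bit_nat bit_0)
qed

definition fk_partial :: "nat \<Rightarrow> nat \<Rightarrow> 'a::comm_ring_1 fps" where
  "fk_partial m N = (\<Prod>j\<in>{j. j < N \<and> \<not> bit m j}. (1 + fps_X ^ (2 ^ j)))"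

lemma fk_eq_lim: "(fk m :: 'a::comm_ring_1 fps) = lim (fk_partial m)"
  unfolding fk_def fk_partial_def ..

lemma fk_partial_Suc:
  "fk_partial m (Suc N) = fk_partial m N * (if bit m N then 1 else 1 + fps_X ^ (2 ^ N))"
proof (cases "bit m N")
  case True
  then have "{j. j < Suc N \<and> \<not> bit m j} = {j. j < N \<and> \<not> bit m j}"
    by (auto simp: less_Suc_eq)
  then show ?thesis using True by (simp add: fk_partial_def)
next
  case False
  then have "{j. j < Suc N \<and> \<not> bit m j} = insert N {j. j < N \<and> \<not> bit m j}"
    by (auto simp: less_Suc_eq)
  then show ?thesis using False by (simp add: fk_partial_def mult.commute)
qed

lemma fk_partial_double:
  "fk_partial m (Suc N) = (if even m then 1 + fps_X else 1) * fps_at_X2 (fk_partial (m div 2) N)"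
proof -
  have "Suc -` {j. j < Suc N \<and> \<not> bit m j} = {j. j < N \<and> \<not> bit (m div 2) j}"
    by (auto simp: bit_Suc)
  then show ?thesis
    unfolding fk_partial_def
    by (subst prod_nat_split_zero) (simp_all add: bit_0 fps_at_X2_prod power_mult)
qed

lemma fps_X_power_dvd_fk_diff: "fps_X ^ N dvd (fk m - fk_partial m N :: 'a::comm_ring_1 fps)"
proof -
  have "fps_X ^ N dvd (fk_partial m (Suc N) - fk_partial m N :: 'a fps)" for N
  proof -
    have "fps_X ^ N dvd (fps_X ^ (2 ^ N) :: 'a fps)"
      by (intro le_imp_power_dvd less_imp_le less_exp)
    then have "fps_X ^ N dvd (fk_partial m N :: 'a fps) * fps_X ^ (2 ^ N)"
      by (rule dvd_mult)
    then have "fps_X ^ N dvd (fk_partial m N :: 'a fps) * (if bit m N then 0 else fps_X ^ (2 ^ N))"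
      by simp
    moreover have "fk_partial m (Suc N) - fk_partial m N
                     = (fk_partial m N :: 'a fps) * (if bit m N then 0 else fps_X ^ (2 ^ N))"
      by (simp add: fk_partial_Suc algebra_simps)
    ultimately show ?thesis by simp
  qed
  then have "fps_X ^ N dvd lim (fk_partial m) - (fk_partial m N :: 'a fps)"
    by (rule fps_X_power_dvd_lim_diff)
  then show ?thesis by (simp only: fk_eq_lim)
qed

lemma fk_double: "(fk m :: 'a::comm_ring_1 fps) = (if even m then 1 + fps_X else 1) * fps_at_X2 (fk (m div 2))"
proof (rule fps_eq_if_fps_X_power_dvd_diff)
  fix N
  define c :: "'a fps" where "c = (if even m then 1 + fps_X else 1)"
  have head: "fps_X ^ N dvd fk m - fk_partial m (Suc N)"
    by (metis fps_X_power_dvd_fk_diff power_Suc dvd_mult_right)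
  have "fps_X ^ (2 * N) dvd fps_at_X2 (fk_partial (m div 2) N - fk (m div 2))"
    by (intro fps_at_X2_dvd) (metis fps_X_power_dvd_fk_diff dvd_minus_iff minus_diff_eq)
  moreover have "fps_X ^ N dvd (fps_X ^ (2 * N) :: 'a fps)"
    by (simp add: le_imp_power_dvd)
  ultimately have tail: "fps_X ^ N dvd c * fps_at_X2 (fk_partial (m div 2) N - fk (m div 2))"
    by (metis dvd_trans dvd_mult)
  from head tail have "fps_X ^ N dvd (fk m - fk_partial m (Suc N))
                     + c * fps_at_X2 (fk_partial (m div 2) N - fk (m div 2))"
    by (rule dvd_add)
  then show "fps_X ^ N dvd fk m - c * fps_at_X2 (fk (m div 2))"
    by (simp add: fk_partial_double c_def algebra_simps)
qed

lemma fk_nth_0: "(fk m :: 'a::comm_ring_1 fps) $ 0 = 1"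
proof -
  have "(fk_partial m N :: 'a fps) $ 0 = 1" for N
    by (induction N) (simp_all add: fk_partial_Suc fk_partial_def[of m 0])
  moreover have "fk m $ 0 = (fk_partial m (Suc 0) :: 'a fps) $ 0"
    using fps_X_power_dvd_fk_diff[of "Suc 0" m] by (rule fps_X_power_dvd_imp_nth_eq) simp
  ultimately show ?thesis by simp
qed

lemma fdot_even: "fdot (2 * k) = fps_at_X2 (fdot k :: 'a::comm_ring_1 fps)"
  using fdot_double[of "2 * k"] by simp

lemma fdot_odd: "fdot (Suc (2 * k)) = (1 - fps_X) * fps_at_X2 (fdot k :: 'a::comm_ring_1 fps)"
  using fdot_double[of "Suc (2 * k)"] by simp

lemma fk_even: "fk (2 * k) = (1 + fps_X) * fps_at_X2 (fk k :: 'a::comm_ring_1 fps)"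
  using fk_double[of "2 * k"] by simp

lemma fk_odd: "fk (Suc (2 * k)) = fps_at_X2 (fk k :: 'a::comm_ring_1 fps)"
  using fk_double[of "Suc (2 * k)"] by simp

lemma sigma_even: "sigma (2 * k) = (sigma k :: 'a::comm_ring_1)"
  using sigma_double[of "2 * k"] by simp

lemma sigma_odd: "sigma (Suc (2 * k)) = - (sigma k :: 'a::comm_ring_1)"
  using sigma_double[of "Suc (2 * k)"] by simp

definition hadamard_term :: "nat \<Rightarrow> 'a::comm_ring_1 fps \<Rightarrow> 'a fps \<Rightarrow> 'a fps" where
  "hadamard_term k a b = (fps_const (sigma k) * fk k * fps_X ^ k) \<odot> (fdot k * a) \<odot> (fdot k * b)"

definition summand :: "nat \<Rightarrow> 'a::comm_ring_1 fps \<Rightarrow> 'a fps \<Rightarrow> 'a fps" where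
  "summand k a b = fk k * hadamard_term k a b"

definition partial_sum :: "nat \<Rightarrow> 'a::comm_ring_1 fps \<Rightarrow> 'a fps \<Rightarrow> 'a fps" where
  "partial_sum N a b = (\<Sum>k<N. summand k a b)"

lemma hadamard_term_even:
  fixes A B C D :: "'a::comm_ring_1 fps"
  shows "hadamard_term (2 * k) (fps_at_X2 A + fps_X * fps_at_X2 B) (fps_at_X2 C + fps_X * fps_at_X2 D)
           = fps_at_X2 (hadamard_term k A C) + fps_X * fps_at_X2 (hadamard_term k B D)"
proof -
  define G :: "'a fps" where "G = fps_const (sigma k) * fk k * fps_X ^ k"
  have G: "fps_const (sigma (2 * k)) * fk (2 * k) * fps_X ^ (2 * k) = fps_at_X2 G + fps_X * fps_at_X2 G"
    unfolding sigma_even fk_even power_mult by (simp add: G_def algebra_simps)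
  have split: "fdot (2 * k) * (fps_at_X2 P + fps_X * fps_at_X2 Q)
                 = fps_at_X2 (fdot k * P) + fps_X * fps_at_X2 (fdot k * Q)" for P Q :: "'a fps"
    unfolding fdot_even by (simp add: algebra_simps)
  have "hadamard_term (2 * k) (fps_at_X2 A + fps_X * fps_at_X2 B) (fps_at_X2 C + fps_X * fps_at_X2 D)
          = (fps_at_X2 G + fps_X * fps_at_X2 G)
            \<odot> (fps_at_X2 (fdot k * A) + fps_X * fps_at_X2 (fdot k * B))
            \<odot> (fps_at_X2 (fdot k * C) + fps_X * fps_at_X2 (fdot k * D))"
    unfolding hadamard_term_def G split ..
  then show ?thesis
    unfolding termwise_prod_at_X2 by (simp only: hadamard_term_def G_def)
qed

lemma hadamard_term_odd:
  fixes A B C D :: "'a::comm_ring_1 fps"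
  shows "hadamard_term (Suc (2 * k)) (fps_at_X2 A + fps_X * fps_at_X2 B) (fps_at_X2 C + fps_X * fps_at_X2 D)
           = - (fps_X * fps_at_X2 (hadamard_term k (B - A) (D - C)))"
proof -
  define G :: "'a fps" where "G = fps_const (sigma k) * fk k * fps_X ^ k"
  have G: "fps_const (sigma (Suc (2 * k))) * fk (Suc (2 * k)) * fps_X ^ Suc (2 * k)
             = fps_at_X2 0 + fps_X * fps_at_X2 (- G)"
    unfolding sigma_odd fk_odd power_Suc power_mult
    by (simp add: G_def algebra_simps flip: fps_const_neg)
  have split: "fdot (Suc (2 * k)) * (fps_at_X2 P + fps_X * fps_at_X2 Q)
                 = fps_at_X2 (fdot k * (P - fps_X * Q)) + fps_X * fps_at_X2 (fdot k * (Q - P))"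
    for P Q :: "'a fps"
    unfolding fdot_odd by (simp add: algebra_simps power2_eq_square)
  have "hadamard_term (Suc (2 * k)) (fps_at_X2 A + fps_X * fps_at_X2 B) (fps_at_X2 C + fps_X * fps_at_X2 D)
          = (fps_at_X2 0 + fps_X * fps_at_X2 (- G))
            \<odot> (fps_at_X2 (fdot k * (A - fps_X * B)) + fps_X * fps_at_X2 (fdot k * (B - A)))
            \<odot> (fps_at_X2 (fdot k * (C - fps_X * D)) + fps_X * fps_at_X2 (fdot k * (D - C)))"
    unfolding hadamard_term_def G split ..
  then show ?thesis
    unfolding termwise_prod_at_X2 by (simp add: hadamard_term_def G_def)
qed

lemma summand_even:
  fixes A B C D :: "'a::comm_ring_1 fps"
  shows "summand (2 * k) (fps_at_X2 A + fps_X * fps_at_X2 B) (fps_at_X2 C + fps_X * fps_at_X2 D)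
           = (1 + fps_X) * (fps_at_X2 (summand k A C) + fps_X * fps_at_X2 (summand k B D))"
  unfolding summand_def hadamard_term_even fk_even by (simp add: algebra_simps)

lemma summand_odd:
  fixes A B C D :: "'a::comm_ring_1 fps"
  shows "summand (Suc (2 * k)) (fps_at_X2 A + fps_X * fps_at_X2 B) (fps_at_X2 C + fps_X * fps_at_X2 D)
           = - (fps_X * fps_at_X2 (summand k (B - A) (D - C)))"
  unfolding summand_def hadamard_term_odd fk_odd by (simp add: algebra_simps)

definition karatsuba ::
    "('a fps \<Rightarrow> 'a fps \<Rightarrow> 'a fps) \<Rightarrow> 'a fps \<Rightarrow> 'a fps \<Rightarrow> 'a fps \<Rightarrow> 'a fps \<Rightarrow> 'a::comm_ring_1 fps" where
  "karatsuba F A B C D = (1 + fps_X) * (fps_at_X2 (F A C) + fps_X * fps_at_X2 (F B D))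
                           - fps_X * fps_at_X2 (F (B - A) (D - C))"

lemma mult_eq_karatsuba:
  fixes A B C D :: "'a::comm_ring_1 fps"
  shows "(fps_at_X2 A + fps_X * fps_at_X2 B) * (fps_at_X2 C + fps_X * fps_at_X2 D) = karatsuba (*) A B C D"
  by (simp add: karatsuba_def algebra_simps power2_eq_square)

lemma karatsuba_diff:
  "karatsuba F A B C D - karatsuba G A B C D = karatsuba (\<lambda>x y. F x y - G x y) A B C D"
  by (simp add: karatsuba_def algebra_simps)

lemma fps_X_power_dvd_karatsuba:
  assumes "\<And>x y. fps_X ^ n dvd F x y"
  shows "fps_X ^ (2 * n) dvd karatsuba F A B C D"
  unfolding karatsuba_def by (intro dvd_diff dvd_add dvd_mult fps_at_X2_dvd assms)

lemma partial_sum_double: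
  fixes A B C D :: "'a::comm_ring_1 fps"
  shows "partial_sum (2 * M) (fps_at_X2 A + fps_X * fps_at_X2 B) (fps_at_X2 C + fps_X * fps_at_X2 D)
           = karatsuba (partial_sum M) A B C D"
proof (induction M)
  case 0
  show ?case by (simp add: partial_sum_def karatsuba_def)
next
  case (Suc M)
  have "2 * Suc M = Suc (Suc (2 * M))" by simp
  then have step: "partial_sum (2 * Suc M) a b
                     = partial_sum (2 * M) a b + summand (2 * M) a b + summand (Suc (2 * M)) a b"
    for a b :: "'a fps"
    by (simp add: partial_sum_def)
  show ?case
    unfolding step Suc.IH summand_even summand_odd by (simp add: karatsuba_def partial_sum_def algebra_simps)
qed

lemma fps_X_power_dvd_summand: "fps_X ^ k dvd summand k a b"
  unfolding summand_def hadamard_term_def by (intro dvd_mult fps_X_power_dvd_termwise_prod) simp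

lemma summand_0_nth_0: "summand 0 a b $ 0 = a $ 0 * b $ 0"
  by (simp add: summand_def hadamard_term_def termwise_prod_def fk_nth_0 sigma_def fdot_def)

lemma fps_X_power_dvd_partial_sum_power2_diff:
  "fps_X ^ (2 ^ L) dvd partial_sum (2 ^ L) a b - a * b"
proof (induction L arbitrary: a b)
  case 0
  have "partial_sum 1 a b $ 0 = (a * b) $ 0" by (simp add: partial_sum_def summand_0_nth_0)
  then show ?case using fps_X_power_dvd_iff[of 1 "partial_sum 1 a b - a * b"] by simp
next
  case (Suc L)
  obtain A B C D where a: "a = fps_at_X2 A + fps_X * fps_at_X2 B"
                   and b: "b = fps_at_X2 C + fps_X * fps_at_X2 D"
    using fps_even_odd_split by metis
  have "partial_sum (2 ^ Suc L) a b - a * b = karatsuba (\<lambda>x y. partial_sum (2 ^ L) x y - x * y) A B C D"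
    unfolding a b power_Suc partial_sum_double mult_eq_karatsuba karatsuba_diff ..
  moreover have "fps_X ^ (2 ^ Suc L) dvd karatsuba (\<lambda>x y. partial_sum (2 ^ L) x y - x * y) A B C D"
    unfolding power_Suc by (intro fps_X_power_dvd_karatsuba Suc.IH)
  ultimately show ?case by simp
qed

lemma fps_X_power_dvd_partial_sum_diff:
  assumes "2 ^ L \<le> N"
  shows "fps_X ^ (2 ^ L) dvd partial_sum N a b - a * b"
proof -
  have "partial_sum N a b - a * b = (partial_sum (2 ^ L) a b - a * b) + (\<Sum>k\<in>{2 ^ L..<N}. summand k a b)"
    using sum.atLeastLessThan_concat[of 0 "2 ^ L" N "\<lambda>k. summand k a b"] assms
    by (simp add: partial_sum_def atLeast0LessThan)
  moreover have "fps_X ^ (2 ^ L) dvd (\<Sum>k\<in>{2 ^ L..<N}. summand k a b)"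
    by (intro dvd_sum) (auto intro: dvd_trans[OF le_imp_power_dvd fps_X_power_dvd_summand])
  ultimately show ?thesis
    using fps_X_power_dvd_partial_sum_power2_diff by (metis dvd_add)
qed

theorem mainTheorem4:
  fixes a b :: "'a::comm_ring_1 fps"
  shows "(\<lambda>N. \<Sum>k<N. fk k * ((fps_const (sigma k) * fk k * fps_X ^ k)
            \<odot> (fdot k * a) \<odot> (fdot k * b)))
         \<longlonglongrightarrow> a * b"
proof -
  have "(\<lambda>N. partial_sum N a b) \<longlonglongrightarrow> a * b"
  proof (rule tendsto_fps_X_adicI)
    fix n
    have X_dvd: "fps_X ^ n dvd (fps_X ^ (2 ^ n) :: 'a fps)"
      by (intro le_imp_power_dvd less_imp_le less_exp)
    show "\<forall>\<^sub>F N in sequentially. fps_X ^ n dvd partial_sum N a b - a * b"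
      using eventually_ge_at_top[of "2 ^ n :: nat"]
      by eventually_elim (metis X_dvd dvd_trans fps_X_power_dvd_partial_sum_diff)
  qed
  then show ?thesis by (simp add: partial_sum_def summand_def hadamard_term_def)
qed

end
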